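(* Let $(D,\prec_\perp,\succ_\perp,\prec_\vdash,\prec_\dashv,\succ_\vdash,\succ_\dashv,\alpha)$ be a Hom-six-dendriform algebra. Define $x\perp y=x\prec_\perp y+x\succ_\perp y$, $x\vdash y=x\prec_\vdash y+x\succ_\vdash y$, $x\dashv y=x\prec_\dashv y+x\succ_\dashv y$ for all $x,y\in D$. Then $(D,\perp,\vdash,\dashv,\alpha)$ is a Hom-triassociative algebra.
   Context: All vector spaces are over a field of characteristic zero. A Hom-dendriform algebra is $(D,\prec,\succ,\alpha)$ with $\prec,\succ$ bilinear on $D$ and $\alpha$ linear such that for all $x,y,z$: $\alpha(x)\prec(y\prec z+y\succ z)=(x\prec y)\prec\alpha(z)$; $\alpha(x)\succ(y\prec z)=(x\succ y)\prec\alpha(z)$; $\alpha(x)\succ(y\succ z)=(x\prec y+x\succ y)\succ\alpha(z)$. A Hom-quadri-dendriform algebra is $(D,\prec_\vdash,\prec_\dashv,\succ_\vdash,\succ_\dashv,\alpha)$ with four bilinear operations and $\alpha$ linear such that for all $x,y,z$: (Q1) $(x\prec_\vdash y)\prec_\vdash\alpha(z)=(x\prec_\dashv y)\prec_\vdash\alpha(z)=\alpha(x)\prec_\vdash(y\prec_\vdash z+y\succ_\vdash z)$; (Q2) $(x\succ_\vdash y)\prec_\vdash\alpha(z)=(x\succ_\dashv y)\prec_\vdash\alpha(z)=\alpha(x)\succ_\vdash(y\prec_\vdash z)$; (Q3) $\alpha(x)\succ_\vdash(y\succ_\vdash z)=(x\prec_\vdash y+x\succ_\vdash y)\succ_\vdash\alpha(z)=(x\prec_\dashv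 y+x\succ_\dashv y)\succ_\vdash\alpha(z)$; (Q4) $\alpha(x)\succ_\vdash(y\succ_\vdash z)=(x\prec_\dashv y+x\succ_\vdash y)\succ_\vdash\alpha(z)=(x\prec_\vdash y+x\succ_\dashv y)\succ_\vdash\alpha(z)$; (Q5) $(x\prec_\vdash y)\prec_\dashv\alpha(z)=\alpha(x)\prec_\vdash(y\prec_\dashv z+y\succ_\dashv z)$; (Q6) $(x\succ_\vdash y)\prec_\dashv\alpha(z)=\alpha(x)\succ_\vdash(y\prec_\dashv z)$; (Q7) $\alpha(x)\succ_\vdash(y\succ_\dashv z)=(x\prec_\vdash y+x\succ_\vdash y)\succ_\dashv\alpha(z)$; (Q8) $(x\prec_\dashv y)\prec_\dashv\alpha(z)=\alpha(x)\prec_\dashv(y\prec_\vdash z+y\succ_\vdash z)=\alpha(x)\prec_\dashv(y\prec_\dashv z+y\succ_\dashv z)$; (Q9) $(x\prec_\dashv y)\prec_\dashv\alpha(z)=\alpha(x)\prec_\dashv(y\prec_\vdash z+y\succ_\dashv z)=\alpha(x)\prec_\dashv(y\prec_\dashv z+y\succ_\vdash z)$; (Q10) $(x\succ_\dashv y)\prec_\dashv\alpha(z)=\alpha(x)\succ_\dashv(y\prec_\vdash z)=\alpha(x)\succ_\dashv(y\prec_\dashv z)$; (Q11) $\alpha(x)\succ_\dashv(y\succ_\vdash z)=\alpha(x)\succ_\dashv(y\succ_\dashv z)=(x\prec_\dashv y+x\succ_\dashv y)\succ_\dashv\alpha(z)$. A Hom-six-dendriform algebra is a tuple $(D,\prec_\perp,\succ_\perp,\prec_\vdash,\prec_\dashv,\succ_\vdash,\succ_\dashv,\alpha)$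 such that $(D,\prec_\perp,\succ_\perp,\alpha)$ is a Hom-dendriform algebra, $(D,\prec_\vdash,\prec_\dashv,\succ_\vdash,\succ_\dashv,\alpha)$ is a Hom-quadri-dendriform algebra, and for all $x,y,z\in D$: (S1) $(x\prec_\vdash y)\prec_\perp\alpha(z)=\alpha(x)\prec_\vdash(y\prec_\perp z+y\succ_\perp z)$; (S2) $(x\succ_\vdash y)\prec_\perp\alpha(z)=\alpha(x)\succ_\vdash(y\prec_\perp z)$; (S3) $\alpha(x)\succ_\vdash(y\succ_\perp z)=(x\prec_\vdash y+x\succ_\vdash y)\succ_\perp\alpha(z)$; (S4) $(x\prec_\dashv y)\prec_\perp\alpha(z)=\alpha(x)\prec_\perp(y\prec_\vdash z+y\succ_\vdash z)$; (S5) $(x\succ_\dashv y)\prec_\perp\alpha(z)=\alpha(x)\succ_\perp(y\prec_\vdash z)$; (S6) $\alpha(x)\succ_\perp(y\succ_\vdash z)=(x\prec_\dashv y+x\succ_\dashv y)\succ_\perp\alpha(z)$; (S7) $(x\prec_\perp y)\prec_\dashv\alpha(z)=\alpha(x)\prec_\perp(y\prec_\dashv z+y\succ_\dashv z)$; (S8) $(x\succ_\perp y)\prec_\dashv\alpha(z)=\alpha(x)\succ_\perp(y\prec_\dashv z)$; (S9) $\alpha(x)\succ_\perp(y\succ_\dashv z)=(x\prec_\perp y+x\succ_\perp y)\succ_\dashv\alpha(z)$; (S10) $(x\prec_\perp y)\prec_\vdash\alpha(z)=(x\prec_\vdash y)\prec_\vdash\alpha(z)=(x\prec_\dashv y)\prec_\vdash\alpha(z)$;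 (S11) $(x\succ_\perp y)\prec_\vdash\alpha(z)=(x\succ_\vdash y)\prec_\vdash\alpha(z)=(x\succ_\dashv y)\prec_\vdash\alpha(z)$; (S12) $(x\prec_\perp y)\succ_\vdash\alpha(z)=(x\prec_\vdash y)\succ_\vdash\alpha(z)=(x\prec_\dashv y)\succ_\vdash\alpha(z)$; (S13) $(x\succ_\perp y)\succ_\vdash\alpha(z)=(x\succ_\vdash y)\succ_\vdash\alpha(z)=(x\succ_\dashv y)\succ_\vdash\alpha(z)$; (S14) $\alpha(x)\prec_\dashv(y\prec_\perp z)=\alpha(x)\prec_\dashv(y\prec_\vdash z)=\alpha(x)\prec_\dashv(y\prec_\dashv z)$; (S15) $\alpha(x)\succ_\dashv(y\prec_\perp z)=\alpha(x)\succ_\dashv(y\prec_\vdash z)=\alpha(x)\succ_\dashv(y\prec_\dashv z)$; (S16) $\alpha(x)\succ_\dashv(y\succ_\perp z)=\alpha(x)\succ_\dashv(y\succ_\vdash z)=\alpha(x)\succ_\dashv(y\succ_\dashv z)$; (S17) $\alpha(x)\prec_\dashv(y\succ_\perp z)=\alpha(x)\prec_\dashv(y\succ_\vdash z)=\alpha(x)\prec_\dashv(y\succ_\dashv z)$. A Hom-triassociative algebra is $(D,\perp,\vdash,\dashv,\alpha)$ with three bilinear operations and $\alpha$ linear such that: $(D,\vdash,\dashv,\alpha)$ is Hom-diassociative, i.e. $(x\dashv y)\dashv\alpha(z)=\alpha(x)\dashv(y\dashv z)$, $(x\dashv y)\dashv\alpha(z)=\alpha(x)\dashv(y\vdash z)$,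 $(x\vdash y)\dashv\alpha(z)=\alpha(x)\vdash(y\dashv z)$, $(x\dashv y)\vdash\alpha(z)=\alpha(x)\vdash(y\vdash z)$, $(x\vdash y)\vdash\alpha(z)=\alpha(x)\vdash(y\vdash z)$; $(D,\perp,\alpha)$ is Hom-associative, i.e. $(x\perp y)\perp\alpha(z)=\alpha(x)\perp(y\perp z)$; and for all $x,y,z$: $(x\dashv y)\dashv\alpha(z)=\alpha(x)\dashv(y\perp z)$; $(x\vdash y)\perp\alpha(z)=\alpha(x)\vdash(y\perp z)$; $(x\perp y)\dashv\alpha(z)=\alpha(x)\perp(y\dashv z)$; $(x\perp y)\vdash\alpha(z)=\alpha(x)\vdash(y\vdash z)$; $(x\dashv y)\perp\alpha(z)=\alpha(x)\perp(y\vdash z)$. *)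

theory Defs
  imports Main "HOL.Vector_Spaces"
begin

definition bilin :: "('k::field \<Rightarrow> 'v::ab_group_add \<Rightarrow> 'v) \<Rightarrow> ('v \<Rightarrow> 'v \<Rightarrow> 'v) \<Rightarrow> bool" where
  "bilin s m \<longleftrightarrow> (\<forall>x. Vector_Spaces.linear s s (m x)) \<and> (\<forall>y. Vector_Spaces.linear s s (\<lambda>x. m x y))"

definition hom_dendriform ::
  "('k::field \<Rightarrow> 'v::ab_group_add \<Rightarrow> 'v) \<Rightarrow> ('v \<Rightarrow> 'v \<Rightarrow> 'v) \<Rightarrow> ('v \<Rightarrow> 'v \<Rightarrow> 'v) \<Rightarrow> ('v \<Rightarrow> 'v) \<Rightarrow> bool" where
  "hom_dendriform s l r a \<longleftrightarrow> bilin s l \<and> bilin s r \<and> Vector_Spaces.linear s s a \<and>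
    (\<forall>x y z.
      l (a x) (l y z + r y z) = l (l x y) (a z) \<and>
      r (a x) (l y z) = l (r x y) (a z) \<and>
      r (a x) (r y z) = r (l x y + r x y) (a z))"

(* Arguments: lv = prec_vdash, ld = prec_dashv, rv = succ_vdash, rd = succ_dashv *)
definition hom_quadri_dendriform ::
  "('k::field \<Rightarrow> 'v::ab_group_add \<Rightarrow> 'v) \<Rightarrow> ('v \<Rightarrow> 'v \<Rightarrow> 'v) \<Rightarrow> ('v \<Rightarrow> 'v \<Rightarrow> 'v) \<Rightarrow>
   ('v \<Rightarrow> 'v \<Rightarrow> 'v) \<Rightarrow> ('v \<Rightarrow> 'v \<Rightarrow> 'v) \<Rightarrow> ('v \<Rightarrow> 'v) \<Rightarrow> bool" where
  "hom_quadri_dendriform s lv ld rv rd a \<longleftrightarrow>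
    bilin s lv \<and> bilin s ld \<and> bilin s rv \<and> bilin s rd \<and> Vector_Spaces.linear s s a \<and>
    (\<forall>x y z.
      \<comment> \<open>Q1\<close>
      lv (lv x y) (a z) = lv (ld x y) (a z) \<and> lv (ld x y) (a z) = lv (a x) (lv y z + rv y z) \<and>
      \<comment> \<open>Q2\<close>
      lv (rv x y) (a z) = lv (rd x y) (a z) \<and> lv (rd x y) (a z) = rv (a x) (lv y z) \<and>
      \<comment> \<open>Q3\<close>
      rv (a x) (rv y z) = rv (lv x y + rv x y) (a z) \<and> rv (lv x y + rv x y) (a z) = rv (ld x y + rd x y) (a z) \<and>
      \<comment> \<open>Q4\<close>
      rv (a x) (rv y z) = rv (ld x y + rv x y) (a z) \<and> rv (ld x y + rv x y) (a z) = rv (lv x y + rd x y) (a z) \<and>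
      \<comment> \<open>Q5\<close>
      ld (lv x y) (a z) = lv (a x) (ld y z + rd y z) \<and>
      \<comment> \<open>Q6\<close>
      ld (rv x y) (a z) = rv (a x) (ld y z) \<and>
      \<comment> \<open>Q7\<close>
      rv (a x) (rd y z) = rd (lv x y + rv x y) (a z) \<and>
      \<comment> \<open>Q8\<close>
      ld (ld x y) (a z) = ld (a x) (lv y z + rv y z) \<and> ld (a x) (lv y z + rv y z) = ld (a x) (ld y z + rd y z) \<and>
      \<comment> \<open>Q9\<close>
      ld (ld x y) (a z) = ld (a x) (lv y z + rd y z) \<and> ld (a x) (lv y z + rd y z) = ld (a x) (ld y z + rv y z) \<and>
      \<comment> \<open>Q10\<close>
      ld (rd x y) (a z) = rd (a x) (lv y z) \<and> rd (a x) (lv y z) = rd (a x) (ld y z) \<and>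
      \<comment> \<open>Q11\<close>
      rd (a x) (rv y z) = rd (a x) (rd y z) \<and> rd (a x) (rd y z) = rd (ld x y + rd x y) (a z))"

(* Arguments: lp = prec_perp, rp = succ_perp, then lv, ld, rv, rd as above *)
definition hom_six_dendriform ::
  "('k::field \<Rightarrow> 'v::ab_group_add \<Rightarrow> 'v) \<Rightarrow> ('v \<Rightarrow> 'v \<Rightarrow> 'v) \<Rightarrow> ('v \<Rightarrow> 'v \<Rightarrow> 'v) \<Rightarrow>
   ('v \<Rightarrow> 'v \<Rightarrow> 'v) \<Rightarrow> ('v \<Rightarrow> 'v \<Rightarrow> 'v) \<Rightarrow> ('v \<Rightarrow> 'v \<Rightarrow> 'v) \<Rightarrow> ('v \<Rightarrow> 'v \<Rightarrow> 'v) \<Rightarrow>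
   ('v \<Rightarrow> 'v) \<Rightarrow> bool" where
  "hom_six_dendriform s lp rp lv ld rv rd a \<longleftrightarrow>
    hom_dendriform s lp rp a \<and> hom_quadri_dendriform s lv ld rv rd a \<and>
    (\<forall>x y z.
      \<comment> \<open>S1\<close> lp (lv x y) (a z) = lv (a x) (lp y z + rp y z) \<and>
      \<comment> \<open>S2\<close> lp (rv x y) (a z) = rv (a x) (lp y z) \<and>
      \<comment> \<open>S3\<close> rv (a x) (rp y z) = rp (lv x y + rv x y) (a z) \<and>
      \<comment> \<open>S4\<close> lp (ld x y) (a z) = lp (a x) (lv y z + rv y z) \<and>
      \<comment> \<open>S5\<close> lp (rd x y) (a z) = rp (a x) (lv y z) \<and>
      \<comment> \<open>S6\<close> rp (a x) (rv y z) = rp (ld x y + rd x y) (a z) \<and>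
      \<comment> \<open>S7\<close> ld (lp x y) (a z) = lp (a x) (ld y z + rd y z) \<and>
      \<comment> \<open>S8\<close> ld (rp x y) (a z) = rp (a x) (ld y z) \<and>
      \<comment> \<open>S9\<close> rp (a x) (rd y z) = rd (lp x y + rp x y) (a z) \<and>
      \<comment> \<open>S10\<close> lv (lp x y) (a z) = lv (lv x y) (a z) \<and> lv (lv x y) (a z) = lv (ld x y) (a z) \<and>
      \<comment> \<open>S11\<close> lv (rp x y) (a z) = lv (rv x y) (a z) \<and> lv (rv x y) (a z) = lv (rd x y) (a z) \<and>
      \<comment> \<open>S12\<close> rv (lp x y) (a z) = rv (lv x y) (a z) \<and> rv (lv x y) (a z) = rv (ld x y) (a z) \<and>
      \<comment> \<open>S13\<close> rv (rp x y) (a z) = rv (rv x y) (a z) \<and> rv (rv x y) (a z) = rv (rd x y) (a z) \<and>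
      \<comment> \<open>S14\<close> ld (a x) (lp y z) = ld (a x) (lv y z) \<and> ld (a x) (lv y z) = ld (a x) (ld y z) \<and>
      \<comment> \<open>S15\<close> rd (a x) (lp y z) = rd (a x) (lv y z) \<and> rd (a x) (lv y z) = rd (a x) (ld y z) \<and>
      \<comment> \<open>S16\<close> rd (a x) (rp y z) = rd (a x) (rv y z) \<and> rd (a x) (rv y z) = rd (a x) (rd y z) \<and>
      \<comment> \<open>S17\<close> ld (a x) (rp y z) = ld (a x) (rv y z) \<and> ld (a x) (rv y z) = ld (a x) (rd y z))"

(* Hom-triassociative algebra: p = perp, v = vdash, d = dashv *)
definition hom_triassociative ::
  "('k::field \<Rightarrow> 'v::ab_group_add \<Rightarrow> 'v) \<Rightarrow> ('v \<Rightarrow> 'v \<Rightarrow> 'v) \<Rightarrow> ('v \<Rightarrow> 'v \<Rightarrow> 'v) \<Rightarrow>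
   ('v \<Rightarrow> 'v \<Rightarrow> 'v) \<Rightarrow> ('v \<Rightarrow> 'v) \<Rightarrow> bool" where
  "hom_triassociative s p v d a \<longleftrightarrow>
    bilin s p \<and> bilin s v \<and> bilin s d \<and> Vector_Spaces.linear s s a \<and>
    (\<forall>x y z.
      d (d x y) (a z) = d (a x) (d y z) \<and>
      d (d x y) (a z) = d (a x) (v y z) \<and>
      d (v x y) (a z) = v (a x) (d y z) \<and>
      v (d x y) (a z) = v (a x) (v y z) \<and>
      v (v x y) (a z) = v (a x) (v y z) \<and>
      p (p x y) (a z) = p (a x) (p y z) \<and>
      d (d x y) (a z) = d (a x) (p y z) \<and>
      p (v x y) (a z) = v (a x) (p y z) \<and>
      d (p x y) (a z) = p (a x) (d y z) \<and>
      v (p x y) (a z) = v (a x) (v y z) \<and>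
      p (d x y) (a z) = p (a x) (v y z))"

end

theory Submission
  imports Defs
begin

(* Expanding the three sums bilinearly turns each of the eleven Hom-triassociativity
   identities into an equality between two sums of three terms, which the axioms match
   summand by summand: the Hom-dendriform axioms give Hom-associativity of \<perp>, the
   quadri-dendriform axioms Hom-diassociativity of \<turnstile> and \<stileturn>, and S1-S9 three of the
   five compatibilities. The remaining two reduce to diassociativity: by S10-S17 the products
   (x \<diamond> y) \<turnstile> \<alpha>(z) and \<alpha>(x) \<stileturn> (y \<diamond> z) only depend on whether \<diamond> is one of the
   operations \<prec> or one of the operations \<succ>, so \<perp> may be replaced by \<stileturn> there. *)

lemma bilin_add:
  assumes "bilin s m" and "bilin s n"
  shows "bilin s (\<lambda>x y. m x y + n x y)"
proof -
  have "vector_space_pair s s"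
    using assms(1) unfolding bilin_def linear_iff vector_space_pair_def by blast
  then show ?thesis
    using assms unfolding bilin_def by (simp add: vector_space_pair.linear_compose_add)
qed

lemma bilin_add_left: "bilin s m \<Longrightarrow> m (x + y) z = m x z + m y z"
  unfolding bilin_def linear_iff by auto

lemma bilin_add_right: "bilin s m \<Longrightarrow> m x (y + z) = m x y + m x z"
  unfolding bilin_def linear_iff by auto

definition hom_associative ::
  "('k::field \<Rightarrow> 'v::ab_group_add \<Rightarrow> 'v) \<Rightarrow> ('v \<Rightarrow> 'v \<Rightarrow> 'v) \<Rightarrow> ('v \<Rightarrow> 'v) \<Rightarrow> bool" where
  "hom_associative s p a \<longleftrightarrow> bilin s p \<and> Vector_Spaces.linear s s a \<and>
    (\<forall>x y z. p (p x y) (a z) = p (a x) (p y z))"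

definition hom_diassociative ::
  "('k::field \<Rightarrow> 'v::ab_group_add \<Rightarrow> 'v) \<Rightarrow> ('v \<Rightarrow> 'v \<Rightarrow> 'v) \<Rightarrow> ('v \<Rightarrow> 'v \<Rightarrow> 'v) \<Rightarrow>
   ('v \<Rightarrow> 'v) \<Rightarrow> bool" where
  "hom_diassociative s v d a \<longleftrightarrow> bilin s v \<and> bilin s d \<and> Vector_Spaces.linear s s a \<and>
    (\<forall>x y z.
      d (d x y) (a z) = d (a x) (d y z) \<and>
      d (d x y) (a z) = d (a x) (v y z) \<and>
      d (v x y) (a z) = v (a x) (d y z) \<and>
      v (d x y) (a z) = v (a x) (v y z) \<and>
      v (v x y) (a z) = v (a x) (v y z))"

lemma hom_triassociativeI:
  assumes "hom_diassociative s v d a" and "hom_associative s p a"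
    and "\<And>x y z. d (d x y) (a z) = d (a x) (p y z)"
    and "\<And>x y z. p (v x y) (a z) = v (a x) (p y z)"
    and "\<And>x y z. d (p x y) (a z) = p (a x) (d y z)"
    and "\<And>x y z. v (p x y) (a z) = v (a x) (v y z)"
    and "\<And>x y z. p (d x y) (a z) = p (a x) (v y z)"
  shows "hom_triassociative s p v d a"
  using assms unfolding hom_triassociative_def hom_diassociative_def hom_associative_def
  by fast

lemma hom_dendriform_imp_hom_associative:
  assumes "hom_dendriform s l r a"
  shows "hom_associative s (\<lambda>x y. l x y + r x y) a"
proof -
  from assms have l: "bilin s l" and r: "bilin s r" and "Vector_Spaces.linear s s a"
    and ax: "\<And>x y z. l (a x) (l y z + r y z) = l (l x y) (a z)"
      "\<And>x y z. r (a x) (l y z) = l (r x y) (a z)"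
      "\<And>x y z. r (a x) (r y z) = r (l x y + r x y) (a z)"
    unfolding hom_dendriform_def by auto
  define p where "p x y = l x y + r x y" for x y
  have "p (p x y) (a z) = p (a x) (p y z)" for x y z
  proof -
    have "p (p x y) (a z) = l (l x y) (a z) + l (r x y) (a z) + r (p x y) (a z)"
      by (simp add: p_def bilin_add_left[OF l])
    also have "\<dots> = l (a x) (p y z) + r (a x) (l y z) + r (a x) (r y z)"
      by (simp add: p_def ax)
    also have "\<dots> = p (a x) (p y z)"
      by (simp add: p_def bilin_add_right[OF r] add_ac)
    finally show ?thesis .
  qed
  then show ?thesis
    using l r \<open>Vector_Spaces.linear s s a\<close>
    unfolding hom_associative_def p_def[abs_def] by (simp add: bilin_add)
qed

lemma hom_quadri_dendriform_dashv_assoc: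
  assumes "hom_quadri_dendriform s lv ld rv rd a"
  defines "v \<equiv> \<lambda>x y. lv x y + rv x y" and "d \<equiv> \<lambda>x y. ld x y + rd x y"
  shows "d (d x y) (a z) = d (a x) (d y z)" and "d (d x y) (a z) = d (a x) (v y z)"
proof -
  from assms(1) have ld: "bilin s ld" and rd: "bilin s rd"
    and Q8: "\<And>x y z. ld (ld x y) (a z) = ld (a x) (lv y z + rv y z)"
      "\<And>x y z. ld (a x) (lv y z + rv y z) = ld (a x) (ld y z + rd y z)"
    and Q10: "\<And>x y z. ld (rd x y) (a z) = rd (a x) (lv y z)"
      "\<And>x y z. rd (a x) (lv y z) = rd (a x) (ld y z)"
    and Q11: "\<And>x y z. rd (a x) (rv y z) = rd (a x) (rd y z)"
      "\<And>x y z. rd (a x) (rd y z) = rd (ld x y + rd x y) (a z)"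
    unfolding hom_quadri_dendriform_def by auto
  have expand: "d (d x y) (a z) = ld (ld x y) (a z) + ld (rd x y) (a z) + rd (d x y) (a z)"
    by (simp add: d_def bilin_add_left[OF ld])
  have "d (d x y) (a z) = ld (a x) (d y z) + rd (a x) (ld y z) + rd (a x) (rd y z)"
    unfolding expand by (simp add: d_def Q8 Q10 Q11)
  also have "\<dots> = d (a x) (d y z)"
    by (simp add: d_def bilin_add_right[OF rd] add_ac)
  finally show "d (d x y) (a z) = d (a x) (d y z)" .
  have "d (d x y) (a z) = ld (a x) (v y z) + rd (a x) (lv y z) + rd (a x) (rv y z)"
    unfolding expand by (simp add: d_def v_def Q8 Q10 Q11)
  also have "\<dots> = d (a x) (v y z)"
    by (simp add: d_def v_def bilin_add_right[OF rd] add_ac)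
  finally show "d (d x y) (a z) = d (a x) (v y z)" .
qed

lemma hom_quadri_dendriform_vdash_dashv_assoc:
  assumes "hom_quadri_dendriform s lv ld rv rd a"
  defines "v \<equiv> \<lambda>x y. lv x y + rv x y" and "d \<equiv> \<lambda>x y. ld x y + rd x y"
  shows "d (v x y) (a z) = v (a x) (d y z)"
proof -
  from assms(1) have ld: "bilin s ld" and rv: "bilin s rv"
    and Q5: "\<And>x y z. ld (lv x y) (a z) = lv (a x) (ld y z + rd y z)"
    and Q6: "\<And>x y z. ld (rv x y) (a z) = rv (a x) (ld y z)"
    and Q7: "\<And>x y z. rv (a x) (rd y z) = rd (lv x y + rv x y) (a z)"
    unfolding hom_quadri_dendriform_def by auto
  have "d (v x y) (a z) = ld (lv x y) (a z) + ld (rv x y) (a z) + rd (v x y) (a z)"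
    by (simp add: v_def d_def bilin_add_left[OF ld])
  also have "\<dots> = lv (a x) (d y z) + rv (a x) (ld y z) + rv (a x) (rd y z)"
    by (simp add: d_def v_def Q5 Q6 Q7)
  also have "\<dots> = v (a x) (d y z)"
    by (simp add: d_def v_def bilin_add_right[OF rv] add_ac)
  finally show ?thesis .
qed

lemma hom_quadri_dendriform_vdash_assoc:
  assumes "hom_quadri_dendriform s lv ld rv rd a"
  defines "v \<equiv> \<lambda>x y. lv x y + rv x y" and "d \<equiv> \<lambda>x y. ld x y + rd x y"
  shows "v (d x y) (a z) = v (a x) (v y z)" and "v (v x y) (a z) = v (a x) (v y z)"
proof -
  from assms(1) have lv: "bilin s lv" and rv: "bilin s rv"
    and Q1: "\<And>x y z. lv (lv x y) (a z) = lv (ld x y) (a z)"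
      "\<And>x y z. lv (ld x y) (a z) = lv (a x) (lv y z + rv y z)"
    and Q2: "\<And>x y z. lv (rv x y) (a z) = lv (rd x y) (a z)"
      "\<And>x y z. lv (rd x y) (a z) = rv (a x) (lv y z)"
    and Q3: "\<And>x y z. rv (a x) (rv y z) = rv (lv x y + rv x y) (a z)"
      "\<And>x y z. rv (lv x y + rv x y) (a z) = rv (ld x y + rd x y) (a z)"
    unfolding hom_quadri_dendriform_def by auto
  have contract: "lv (a x) (v y z) + rv (a x) (lv y z) + rv (a x) (rv y z) = v (a x) (v y z)"
    by (simp add: v_def bilin_add_right[OF rv] add_ac)
  have "v (d x y) (a z) = lv (ld x y) (a z) + lv (rd x y) (a z) + rv (d x y) (a z)"
    by (simp add: v_def d_def bilin_add_left[OF lv])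
  also have "\<dots> = lv (a x) (v y z) + rv (a x) (lv y z) + rv (a x) (rv y z)"
    by (simp add: d_def v_def Q1 Q2 Q3)
  finally show "v (d x y) (a z) = v (a x) (v y z)"
    unfolding contract .
  have "v (v x y) (a z) = lv (lv x y) (a z) + lv (rv x y) (a z) + rv (v x y) (a z)"
    by (simp add: v_def bilin_add_left[OF lv])
  also have "\<dots> = lv (a x) (v y z) + rv (a x) (lv y z) + rv (a x) (rv y z)"
    by (simp add: v_def Q1 Q2 Q3)
  finally show "v (v x y) (a z) = v (a x) (v y z)"
    unfolding contract .
qed

lemma hom_quadri_dendriform_imp_hom_diassociative:
  assumes "hom_quadri_dendriform s lv ld rv rd a"
  shows "hom_diassociative s (\<lambda>x y. lv x y + rv x y) (\<lambda>x y. ld x y + rd x y) a"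
  using assms hom_quadri_dendriform_dashv_assoc[OF assms] hom_quadri_dendriform_vdash_dashv_assoc[OF assms]
    hom_quadri_dendriform_vdash_assoc[OF assms]
  unfolding hom_diassociative_def hom_quadri_dendriform_def by (simp add: bilin_add)

lemma hom_six_dendriform_mixed_assoc:
  assumes "hom_six_dendriform s lp rp lv ld rv rd a"
  defines "p \<equiv> \<lambda>x y. lp x y + rp x y"
    and "v \<equiv> \<lambda>x y. lv x y + rv x y"
    and "d \<equiv> \<lambda>x y. ld x y + rd x y"
  shows "p (v x y) (a z) = v (a x) (p y z)"
    and "d (p x y) (a z) = p (a x) (d y z)"
    and "p (d x y) (a z) = p (a x) (v y z)"
proof -
  from assms(1) have lp: "bilin s lp" and rp: "bilin s rp"
    and ld: "bilin s ld" and rv: "bilin s rv"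
    and S1: "\<And>x y z. lp (lv x y) (a z) = lv (a x) (lp y z + rp y z)"
    and S2: "\<And>x y z. lp (rv x y) (a z) = rv (a x) (lp y z)"
    and S3: "\<And>x y z. rv (a x) (rp y z) = rp (lv x y + rv x y) (a z)"
    and S4: "\<And>x y z. lp (ld x y) (a z) = lp (a x) (lv y z + rv y z)"
    and S5: "\<And>x y z. lp (rd x y) (a z) = rp (a x) (lv y z)"
    and S6: "\<And>x y z. rp (a x) (rv y z) = rp (ld x y + rd x y) (a z)"
    and S7: "\<And>x y z. ld (lp x y) (a z) = lp (a x) (ld y z + rd y z)"
    and S8: "\<And>x y z. ld (rp x y) (a z) = rp (a x) (ld y z)"
    and S9: "\<And>x y z. rp (a x) (rd y z) = rd (lp x y + rp x y) (a z)"
    unfolding hom_six_dendriform_def hom_dendriform_def hom_quadri_dendriform_def by auto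
  have "p (v x y) (a z) = lp (lv x y) (a z) + lp (rv x y) (a z) + rp (v x y) (a z)"
    by (simp add: p_def v_def bilin_add_left[OF lp])
  also have "\<dots> = lv (a x) (p y z) + rv (a x) (lp y z) + rv (a x) (rp y z)"
    by (simp add: p_def v_def S1 S2 S3)
  also have "\<dots> = v (a x) (p y z)"
    by (simp add: p_def v_def bilin_add_right[OF rv] add_ac)
  finally show "p (v x y) (a z) = v (a x) (p y z)" .
  have "d (p x y) (a z) = ld (lp x y) (a z) + ld (rp x y) (a z) + rd (p x y) (a z)"
    by (simp add: p_def d_def bilin_add_left[OF ld])
  also have "\<dots> = lp (a x) (d y z) + rp (a x) (ld y z) + rp (a x) (rd y z)"
    by (simp add: p_def d_def S7 S8 S9)
  also have "\<dots> = p (a x) (d y z)"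
    by (simp add: p_def d_def bilin_add_right[OF rp] add_ac)
  finally show "d (p x y) (a z) = p (a x) (d y z)" .
  have "p (d x y) (a z) = lp (ld x y) (a z) + lp (rd x y) (a z) + rp (d x y) (a z)"
    by (simp add: p_def d_def bilin_add_left[OF lp])
  also have "\<dots> = lp (a x) (v y z) + rp (a x) (lv y z) + rp (a x) (rv y z)"
    by (simp add: p_def d_def v_def S4 S5 S6)
  also have "\<dots> = p (a x) (v y z)"
    by (simp add: p_def v_def bilin_add_right[OF rp] add_ac)
  finally show "p (d x y) (a z) = p (a x) (v y z)" .
qed

lemma hom_six_dendriform_dashv_perp_eq_dashv_dashv:
  assumes "hom_six_dendriform s lp rp lv ld rv rd a"
  defines "p \<equiv> \<lambda>x y. lp x y + rp x y" and "d \<equiv> \<lambda>x y. ld x y + rd x y"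
  shows "d (a x) (p y z) = d (a x) (d y z)"
proof -
  from assms(1) have "bilin s ld" and "bilin s rd"
    and "\<And>x y z. ld (a x) (lp y z) = ld (a x) (ld y z)"
      "\<And>x y z. rd (a x) (lp y z) = rd (a x) (ld y z)"
      "\<And>x y z. rd (a x) (rp y z) = rd (a x) (rd y z)"
      "\<And>x y z. ld (a x) (rp y z) = ld (a x) (rd y z)"
    unfolding hom_six_dendriform_def hom_quadri_dendriform_def by auto
  then show ?thesis
    by (simp add: p_def d_def bilin_add_right)
qed

lemma hom_six_dendriform_perp_vdash_eq_dashv_vdash:
  assumes "hom_six_dendriform s lp rp lv ld rv rd a"
  defines "p \<equiv> \<lambda>x y. lp x y + rp x y"
    and "v \<equiv> \<lambda>x y. lv x y + rv x y"
    and "d \<equiv> \<lambda>x y. ld x y + rd x y"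
  shows "v (p x y) (a z) = v (d x y) (a z)"
proof -
  from assms(1) have "bilin s lv" and "bilin s rv"
    and "\<And>x y z. lv (lp x y) (a z) = lv (ld x y) (a z)"
      "\<And>x y z. lv (rp x y) (a z) = lv (rd x y) (a z)"
      "\<And>x y z. rv (lp x y) (a z) = rv (ld x y) (a z)"
      "\<And>x y z. rv (rp x y) (a z) = rv (rd x y) (a z)"
    unfolding hom_six_dendriform_def hom_quadri_dendriform_def by auto
  then show ?thesis
    by (simp add: p_def v_def d_def bilin_add_left)
qed

theorem proposition4p7:
  fixes s :: "'k::field_char_0 \<Rightarrow> 'v::ab_group_add \<Rightarrow> 'v"
    and lp rp lv ld rv rd :: "'v \<Rightarrow> 'v \<Rightarrow> 'v" and a :: "'v \<Rightarrow> 'v"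
  assumes "vector_space s"
    and "hom_six_dendriform s lp rp lv ld rv rd a"
  shows "hom_triassociative s (\<lambda>x y. lp x y + rp x y) (\<lambda>x y. lv x y + rv x y)
           (\<lambda>x y. ld x y + rd x y) a"
proof -
  from assms(2) have dendriform: "hom_dendriform s lp rp a"
    and quadri: "hom_quadri_dendriform s lv ld rv rd a"
    unfolding hom_six_dendriform_def by auto
  show ?thesis
  proof (rule hom_triassociativeI)
    show "hom_diassociative s (\<lambda>x y. lv x y + rv x y) (\<lambda>x y. ld x y + rd x y) a"
      using quadri by (rule hom_quadri_dendriform_imp_hom_diassociative)
    show "hom_associative s (\<lambda>x y. lp x y + rp x y) a"
      using dendriform by (rule hom_dendriform_imp_hom_associative)
  qed (use hom_six_dendriform_mixed_assoc[OF assms(2)]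
        hom_six_dendriform_dashv_perp_eq_dashv_dashv[OF assms(2)]
        hom_six_dendriform_perp_vdash_eq_dashv_vdash[OF assms(2)]
        hom_quadri_dendriform_dashv_assoc(1)[OF quadri]
        hom_quadri_dendriform_vdash_assoc(1)[OF quadri] in simp_all)
qed

end
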